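(* Let $U$ be a finite set of men and $W_1\subseteq W_2$ finite sets of women with $|W_1|\le|W_2|=|U|$, each man having a strict total order over $W_2$ and each woman a strict total order over $U$. Let $M_1,M_1'$ be stable matchings of $(U,W_1)$ such that $M_1'$ men-dominates $M_1$, and let $M_2$ be a stable matching of $(U,W_2)$. Define $M_2'$ as the union of: the pairs of $M_1'\cap M_2$; for each path component of $G(M_1',M_2)$, its edges belonging to $M_2$; for each cycle of $G(M_1',M_2)$ of Type I, its edges belonging to $M_2$; for each cycle of $G(M_1',M_2)$ of Type II, its edges belonging to $M_1'$. Then $|M_1'\setminus M_2'|\le |M_1\setminus M_2|$.
   Context: A matching is a set of man–woman pairs with each person in at most one pair; a blocking pair of $M$ is a pair $(u,w)\notin M$ with ($u$ unmatched or preferring $w$ to his partner) and ($w$ unmatched or preferring $u$ to her partner); a matching is stable if it has no blocking pair. Preferences in a sub-instance are restrictions of the given ones. $M$ men-dominates $M'$ if every man's partner in $M$ is at least as good for him as his partner in $M'$. The difference graph $G(M,M')$ has vertex set $U\cup W_2$ and edge set $M\triangle M'$. A cycle $C$ of $G(M_1',M_2)$ is of Type I if every man in $C$ strictly prefers his partner in $M_2$ to his partner in $M_1'$ and every woman in $C$ strictly prefers her partner in $M_1'$ to her partner in $M_2$; it is of Type II if every man in $C$ strictly prefers his partner in $M_1'$ to his partner in $M_2$ and every woman in $C$ strictly prefers her partner in $M_2$ to her partner in $M_1'$ (every cycle is of one of these types). *)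

theory Defs
  imports Main
begin

text \<open>Preferences: pm u a b means man u strictly prefers woman a to woman b;
  pw w x y means woman w strictly prefers man x to man y.
  A matching is a set of (man, woman) pairs.\<close>

definition strict_total_on :: "'a set \<Rightarrow> ('a \<Rightarrow> 'a \<Rightarrow> bool) \<Rightarrow> bool" where
  "strict_total_on A r \<longleftrightarrow>
     (\<forall>x\<in>A. \<not> r x x) \<and>
     (\<forall>x\<in>A. \<forall>y\<in>A. \<forall>z\<in>A. r x y \<longrightarrow> r y z \<longrightarrow> r x z) \<and>
     (\<forall>x\<in>A. \<forall>y\<in>A. x \<noteq> y \<longrightarrow> r x y \<or> r y x)"

definition is_matching :: "'m set \<Rightarrow> 'w set \<Rightarrow> ('m \<times> 'w) set \<Rightarrow> bool" where
  "is_matching U W M \<longleftrightarrow> M \<subseteq> U \<times> W \<and>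
     (\<forall>u w w'. (u, w) \<in> M \<longrightarrow> (u, w') \<in> M \<longrightarrow> w = w') \<and>
     (\<forall>u u' w. (u, w) \<in> M \<longrightarrow> (u', w) \<in> M \<longrightarrow> u = u')"

definition blocking_pair ::
  "('m \<Rightarrow> 'w \<Rightarrow> 'w \<Rightarrow> bool) \<Rightarrow> ('w \<Rightarrow> 'm \<Rightarrow> 'm \<Rightarrow> bool) \<Rightarrow> ('m \<times> 'w) set \<Rightarrow> 'm \<Rightarrow> 'w \<Rightarrow> bool" where
  "blocking_pair pm pw M u w \<longleftrightarrow> (u, w) \<notin> M \<and>
     (\<forall>w'. (u, w') \<in> M \<longrightarrow> pm u w w') \<and>
     (\<forall>u'. (u', w) \<in> M \<longrightarrow> pw w u u')"

definition stable_matching ::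
  "('m \<Rightarrow> 'w \<Rightarrow> 'w \<Rightarrow> bool) \<Rightarrow> ('w \<Rightarrow> 'm \<Rightarrow> 'm \<Rightarrow> bool) \<Rightarrow> 'm set \<Rightarrow> 'w set \<Rightarrow> ('m \<times> 'w) set \<Rightarrow> bool" where
  "stable_matching pm pw U W M \<longleftrightarrow> is_matching U W M \<and>
     (\<forall>u\<in>U. \<forall>w\<in>W. \<not> blocking_pair pm pw M u w)"

text \<open>M men-dominates M': every man's partner in M is at least as good as his partner in M'
  (being unmatched is worst).\<close>
definition men_dominates :: "('m \<Rightarrow> 'w \<Rightarrow> 'w \<Rightarrow> bool) \<Rightarrow> ('m \<times> 'w) set \<Rightarrow> ('m \<times> 'w) set \<Rightarrow> bool" where
  "men_dominates pm M M' \<longleftrightarrow>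
     (\<forall>u w'. (u, w') \<in> M' \<longrightarrow> (\<exists>w. (u, w) \<in> M \<and> (w = w' \<or> pm u w w')))"

definition diff_edges :: "('m \<times> 'w) set \<Rightarrow> ('m \<times> 'w) set \<Rightarrow> ('m \<times> 'w) set" where
  "diff_edges M M' = (M - M') \<union> (M' - M)"

definition edge_adj :: "('m \<times> 'w) set \<Rightarrow> (('m \<times> 'w) \<times> ('m \<times> 'w)) set" where
  "edge_adj E = {(e1, e2). e1 \<in> E \<and> e2 \<in> E \<and> (fst e1 = fst e2 \<or> snd e1 = snd e2)}"

definition comp_of :: "('m \<times> 'w) set \<Rightarrow> ('m \<times> 'w) \<Rightarrow> ('m \<times> 'w) set" where
  "comp_of E e = {e'. (e, e') \<in> (edge_adj E)\<^sup>*}"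

text \<open>A component is a cycle iff every vertex on it has degree 2 (max degree is 2).\<close>
definition is_cycle :: "('m \<times> 'w) set \<Rightarrow> bool" where
  "is_cycle C \<longleftrightarrow> C \<noteq> {} \<and>
     (\<forall>u w. (u, w) \<in> C \<longrightarrow> card {w'. (u, w') \<in> C} = 2 \<and> card {u'. (u', w) \<in> C} = 2)"

definition typeI ::
  "('m \<Rightarrow> 'w \<Rightarrow> 'w \<Rightarrow> bool) \<Rightarrow> ('w \<Rightarrow> 'm \<Rightarrow> 'm \<Rightarrow> bool) \<Rightarrow> ('m \<times> 'w) set \<Rightarrow> ('m \<times> 'w) set \<Rightarrow> ('m \<times> 'w) set \<Rightarrow> bool" where
  "typeI pm pw M1' M2 C \<longleftrightarrow>
     (\<forall>u w w'. (u, w) \<in> C \<inter> M2 \<longrightarrow> (u, w') \<in> C \<inter> M1' \<longrightarrow> pm u w w') \<and>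
     (\<forall>w u u'. (u', w) \<in> C \<inter> M1' \<longrightarrow> (u, w) \<in> C \<inter> M2 \<longrightarrow> pw w u' u)"

definition typeII ::
  "('m \<Rightarrow> 'w \<Rightarrow> 'w \<Rightarrow> bool) \<Rightarrow> ('w \<Rightarrow> 'm \<Rightarrow> 'm \<Rightarrow> bool) \<Rightarrow> ('m \<times> 'w) set \<Rightarrow> ('m \<times> 'w) set \<Rightarrow> ('m \<times> 'w) set \<Rightarrow> bool" where
  "typeII pm pw M1' M2 C \<longleftrightarrow>
     (\<forall>u w w'. (u, w) \<in> C \<inter> M2 \<longrightarrow> (u, w') \<in> C \<inter> M1' \<longrightarrow> pm u w' w) \<and>
     (\<forall>w u u'. (u', w) \<in> C \<inter> M1' \<longrightarrow> (u, w) \<in> C \<inter> M2 \<longrightarrow> pw w u u')"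

definition new_matching ::
  "('m \<Rightarrow> 'w \<Rightarrow> 'w \<Rightarrow> bool) \<Rightarrow> ('w \<Rightarrow> 'm \<Rightarrow> 'm \<Rightarrow> bool) \<Rightarrow> ('m \<times> 'w) set \<Rightarrow> ('m \<times> 'w) set \<Rightarrow> ('m \<times> 'w) set" where
  "new_matching pm pw M1' M2 =
     (let E = diff_edges M1' M2 in
       (M1' \<inter> M2)
       \<union> {e \<in> M2 - M1'. \<not> is_cycle (comp_of E e)}
       \<union> {e \<in> M2 - M1'. is_cycle (comp_of E e) \<and> typeI pm pw M1' M2 (comp_of E e)}
       \<union> {e \<in> M1' - M2. is_cycle (comp_of E e) \<and> typeII pm pw M1' M2 (comp_of E e)})"

end

theory Submission
  imports Defs
begin

text \<open>Call a man an improver if he strictly prefers his partner in M1' to his partner in M2.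
  Stability of M2 and then of M1' shows that the M2-partner of an improver's M1'-partner is again
  an improver; counting, M1' and M2 match the same women to the improvers.  Hence every edge at an
  improver lies on a cycle of G(M1',M2) consisting of improvers only, which is of Type II, so all
  M1'-edges at improvers survive in M2'.  Since M1' men-dominates M1, each pair of M1 \<inter> M2 yields
  a pair of M1' \<inter> M2' at the same man, and |M1'| \<le> |W1| = |M1| because the stable matching M1
  matches every woman of W1.\<close>

lemma strict_total_onD:
  assumes "strict_total_on A r" and "x \<in> A"
  shows "\<not> r x x" and "y \<in> A \<Longrightarrow> x \<noteq> y \<Longrightarrow> \<not> r x y \<Longrightarrow> r y x"
  using assms unfolding strict_total_on_def by blast+

lemma is_matchingD:
  assumes "is_matching U W M"
  shows "M \<subseteq> U \<times> W"
    and "(u, w) \<in> M \<Longrightarrow> (u, w') \<in> M \<Longrightarrow> w = w'"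
    and "(u, w) \<in> M \<Longrightarrow> (u', w) \<in> M \<Longrightarrow> u = u'"
  using assms unfolding is_matching_def by blast+

lemma is_matching_inj_on_fst: "is_matching U W M \<Longrightarrow> inj_on fst M"
  unfolding is_matching_def inj_on_def by auto

lemma is_matching_inj_on_snd: "is_matching U W M \<Longrightarrow> inj_on snd M"
  unfolding is_matching_def inj_on_def by auto

lemma card_Image_matching:
  assumes "is_matching U W M" and "G \<subseteq> Domain M"
  shows "card (M `` G) = card G"
proof -
  let ?MG = "M \<inter> G \<times> UNIV"
  have "card (M `` G) = card (snd ` ?MG)" by (rule arg_cong[where f = card]) force
  also have "\<dots> = card ?MG"
    using is_matching_inj_on_snd[OF assms(1)] by (intro card_image) (auto intro: inj_on_subset)
  also have "\<dots> = card (fst ` ?MG)"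
    using is_matching_inj_on_fst[OF assms(1)] by (intro card_image[symmetric]) (auto intro: inj_on_subset)
  also have "fst ` ?MG = G" using assms(2) by force
  finally show ?thesis .
qed

lemma stable_matching_matches_all_women:
  assumes stable: "stable_matching pm pw U W M"
    and "finite U" "finite W" "card W \<le> card U"
  shows "snd ` M = W"
proof -
  have matching: "is_matching U W M" using stable by (simp add: stable_matching_def)
  note M_subset = is_matchingD(1)[OF matching]
  have "W \<subseteq> snd ` M"
  proof
    fix w assume w: "w \<in> W"
    show "w \<in> snd ` M"
    proof (rule ccontr)
      assume unmatched: "w \<notin> snd ` M"
      \<comment> \<open>every man is then matched, since an unmatched one would block with w\<close>
      have "U \<subseteq> fst ` M"
      proof
        fix u assume "u \<in> U"
        with stable w have "\<not> blocking_pair pm pw M u w" by (simp add: stable_matching_def)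
        with unmatched show "u \<in> fst ` M" by (force simp: blocking_pair_def)
      qed
      have fin: "finite M" using M_subset assms(2,3) finite_subset by blast
      have "card U \<le> card (fst ` M)" using \<open>U \<subseteq> fst ` M\<close> fin by (simp add: card_mono)
      also have "\<dots> = card (snd ` M)"
        using is_matching_inj_on_fst[OF matching] is_matching_inj_on_snd[OF matching]
        by (simp add: card_image)
      also have "\<dots> < card W"
        using M_subset unmatched w assms(3) by (intro psubset_card_mono) auto
      finally show False using assms(4) by simp
    qed
  qed
  with M_subset show ?thesis by auto
qed

lemma card_matching_le_card_stable_matching:
  assumes "is_matching U W M'" and "stable_matching pm pw U W M"
    and "finite U" "finite W" "card W \<le> card U"
  shows "card M' \<le> card M"
proof -
  have "is_matching U W M" using assms(2) by (simp add: stable_matching_def)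
  have "card M' = card (snd ` M')" using is_matching_inj_on_snd[OF assms(1)] by (simp add: card_image)
  also have "\<dots> \<le> card W" using is_matchingD(1)[OF assms(1)] assms(4) by (intro card_mono) auto
  also have "\<dots> = card (snd ` M)" using stable_matching_matches_all_women[OF assms(2-5)] by simp
  also have "\<dots> = card M" using is_matching_inj_on_snd[OF \<open>is_matching U W M\<close>] by (simp add: card_image)
  finally show ?thesis .
qed

lemma comp_of_minimal:
  assumes "e \<in> C" and "\<And>e1 e2. e1 \<in> C \<Longrightarrow> (e1, e2) \<in> edge_adj E \<Longrightarrow> e2 \<in> C"
  shows "comp_of E e \<subseteq> C"
proof
  fix e' assume "e' \<in> comp_of E e"
  hence "(e, e') \<in> (edge_adj E)\<^sup>*" by (simp add: comp_of_def)
  thus "e' \<in> C" by (induction rule: rtrancl_induct) (use assms in auto)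
qed

lemma comp_of_subset: "e \<in> E \<Longrightarrow> comp_of E e \<subseteq> E"
  by (rule comp_of_minimal) (auto simp: edge_adj_def)

lemma comp_of_adj_closed: "e1 \<in> comp_of E e \<Longrightarrow> (e1, e2) \<in> edge_adj E \<Longrightarrow> e2 \<in> comp_of E e"
  unfolding comp_of_def by (simp add: rtrancl.rtrancl_into_rtrancl)

lemma comp_of_edges_at_man:
  assumes "e \<in> E" and "(u, w) \<in> comp_of E e"
  shows "{w'. (u, w') \<in> comp_of E e} = {w'. (u, w') \<in> E}"
  using comp_of_subset[OF assms(1)] comp_of_adj_closed[OF assms(2)] assms
  by (auto simp: edge_adj_def)

lemma comp_of_edges_at_woman:
  assumes "e \<in> E" and "(u, w) \<in> comp_of E e"
  shows "{u'. (u', w) \<in> comp_of E e} = {u'. (u', w) \<in> E}"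
  using comp_of_subset[OF assms(1)] comp_of_adj_closed[OF assms(2)] assms
  by (auto simp: edge_adj_def)

definition improvers :: "('m \<Rightarrow> 'w \<Rightarrow> 'w \<Rightarrow> bool) \<Rightarrow> ('m \<times> 'w) set \<Rightarrow> ('m \<times> 'w) set \<Rightarrow> 'm set" where
  "improvers pm M M' = {u. \<exists>w w'. (u, w) \<in> M \<and> (u, w') \<in> M' \<and> pm u w w'}"

locale two_stable_matchings =
  fixes pm :: "'m \<Rightarrow> 'w \<Rightarrow> 'w \<Rightarrow> bool" and pw :: "'w \<Rightarrow> 'm \<Rightarrow> 'm \<Rightarrow> bool"
    and U :: "'m set" and W1 W2 :: "'w set" and M1' M2 :: "('m \<times> 'w) set"
  assumes finite_U: "finite U" and finite_W2: "finite W2"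
    and W1_subset: "W1 \<subseteq> W2"
    and pm_total: "\<forall>u\<in>U. strict_total_on W2 (pm u)"
    and pw_total: "\<forall>w\<in>W2. strict_total_on U (pw w)"
    and stable1: "stable_matching pm pw U W1 M1'"
    and stable2: "stable_matching pm pw U W2 M2"
begin

lemma matching1: "is_matching U W1 M1'" and matching2: "is_matching U W2 M2"
  using stable1 stable2 by (simp_all add: stable_matching_def)

lemmas M1'_subset = is_matchingD(1)[OF matching1]
  and M1'_man_unique = is_matchingD(2)[OF matching1]
  and M1'_woman_unique = is_matchingD(3)[OF matching1]
  and M2_subset = is_matchingD(1)[OF matching2]
  and M2_man_unique = is_matchingD(2)[OF matching2]
  and M2_woman_unique = is_matchingD(3)[OF matching2]

lemma improversD:
  assumes "x \<in> improvers pm M1' M2" and "(x, a) \<in> M1'" and "(x, b) \<in> M2"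
  shows "pm x a b" and "a \<noteq> b"
proof -
  show "pm x a b" using assms M1'_man_unique M2_man_unique unfolding improvers_def by blast
  moreover have "x \<in> U" "a \<in> W2" using assms(2) M1'_subset W1_subset by auto
  ultimately show "a \<noteq> b" using pm_total strict_total_onD(1) by metis
qed

lemma improver_successor:
  assumes xa: "(x, a) \<in> M1'" and xb: "(x, b) \<in> M2" and pref: "pm x a b"
  shows "\<exists>y. (y, a) \<in> M2 \<and> pw a y x \<and> y \<in> improvers pm M1' M2"
proof -
  have x: "x \<in> U" and a1: "a \<in> W1" and a2: "a \<in> W2" using xa M1'_subset W1_subset by auto
  have "a \<noteq> b" using pref pm_total x a2 strict_total_onD(1) by metis
  hence "(x, a) \<notin> M2" using xb M2_man_unique by blast
  moreover have "\<not> blocking_pair pm pw M2 x a" using stable2 x a2 by (simp add: stable_matching_def)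
  ultimately obtain y where ya: "(y, a) \<in> M2" and "\<not> pw a x y"
    using xb pref M2_man_unique unfolding blocking_pair_def by blast
  moreover have "y \<in> U" "y \<noteq> x" using ya M2_subset \<open>(x, a) \<notin> M2\<close> by auto
  ultimately have prefa: "pw a y x" using pw_total x a2 strict_total_onD(2) by metis
  have "(y, a) \<notin> M1'" using xa \<open>y \<noteq> x\<close> M1'_woman_unique by blast
  moreover have "\<not> blocking_pair pm pw M1' y a" using stable1 \<open>y \<in> U\<close> a1 by (simp add: stable_matching_def)
  ultimately obtain c where yc: "(y, c) \<in> M1'" and "\<not> pm y a c"
    using xa prefa M1'_woman_unique unfolding blocking_pair_def by blast
  moreover have "c \<in> W2" "c \<noteq> a" using yc M1'_subset W1_subset \<open>(y, a) \<notin> M1'\<close> by auto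
  ultimately have "pm y c a" using pm_total \<open>y \<in> U\<close> a2 strict_total_onD(2) by metis
  with ya yc prefa show ?thesis by (auto simp: improvers_def)
qed

lemma improvers_partners_eq: "M1' `` improvers pm M1' M2 = M2 `` improvers pm M1' M2"
proof -
  let ?G = "improvers pm M1' M2"
  have G_sub: "?G \<subseteq> Domain M1'" "?G \<subseteq> Domain M2" by (auto simp: improvers_def)
  have sub: "M1' `` ?G \<subseteq> M2 `` ?G"
  proof
    fix a assume "a \<in> M1' `` ?G"
    then obtain x b where "x \<in> ?G" "(x, a) \<in> M1'" "(x, b) \<in> M2"
      using G_sub(2) by blast
    with improver_successor improversD(1) show "a \<in> M2 `` ?G" by blast
  qed
  have "finite (M2 `` ?G)" using M2_subset finite_W2 by (blast intro: finite_subset)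
  moreover have "card (M1' `` ?G) = card (M2 `` ?G)"
    using card_Image_matching[OF matching1 G_sub(1)] card_Image_matching[OF matching2 G_sub(2)] by simp
  ultimately show ?thesis using sub by (simp add: card_subset_eq)
qed

lemma improver_partner_partners:
  assumes "x \<in> improvers pm M1' M2" and "(x, a) \<in> M1' \<union> M2"
  obtains z1 z2 where "z1 \<in> improvers pm M1' M2" "(z1, a) \<in> M1'"
    and "z2 \<in> improvers pm M1' M2" "(z2, a) \<in> M2"
proof -
  have "a \<in> M1' `` improvers pm M1' M2" "a \<in> M2 `` improvers pm M1' M2"
    using assms improvers_partners_eq by blast+
  thus ?thesis using that by blast
qed

lemma improver_partner_partners_improvers:
  assumes "x \<in> improvers pm M1' M2" and "(x, a) \<in> M1' \<union> M2" and "(y, a) \<in> M1' \<union> M2"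
  shows "y \<in> improvers pm M1' M2"
proof -
  obtain z1 z2 where "z1 \<in> improvers pm M1' M2" "(z1, a) \<in> M1'"
    "z2 \<in> improvers pm M1' M2" "(z2, a) \<in> M2"
    using assms(1,2) by (rule improver_partner_partners)
  with assms(3) M1'_woman_unique M2_woman_unique show ?thesis by blast
qed

lemma improver_has_partners:
  assumes "x \<in> improvers pm M1' M2"
  obtains a b where "(x, a) \<in> M1'" "(x, b) \<in> M2" "a \<noteq> b"
  using assms improversD(2) unfolding improvers_def by blast

lemma improver_edges_diff_edges:
  assumes "x \<in> improvers pm M1' M2"
  shows "{a. (x, a) \<in> diff_edges M1' M2} = {a. (x, a) \<in> M1' \<union> M2}"
proof -
  obtain a b where "(x, a) \<in> M1'" "(x, b) \<in> M2" "a \<noteq> b"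
    using assms by (rule improver_has_partners)
  hence "(x, c) \<notin> M1' \<inter> M2" for c using M1'_man_unique M2_man_unique by blast
  thus ?thesis by (auto simp: diff_edges_def)
qed

lemma card_diff_edges_at_improver:
  assumes "x \<in> improvers pm M1' M2"
  shows "card {a. (x, a) \<in> diff_edges M1' M2} = 2"
proof -
  obtain a b where ab: "(x, a) \<in> M1'" "(x, b) \<in> M2" "a \<noteq> b"
    using assms by (rule improver_has_partners)
  hence "{a. (x, a) \<in> M1' \<union> M2} = {a, b}" using M1'_man_unique M2_man_unique by blast
  with ab show ?thesis by (simp add: improver_edges_diff_edges[OF assms])
qed

lemma card_diff_edges_at_improver_partner:
  assumes "x \<in> improvers pm M1' M2" and "(x, a) \<in> M1' \<union> M2"
  shows "card {u. (u, a) \<in> diff_edges M1' M2} = 2"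
proof -
  obtain z1 z2 where z: "z1 \<in> improvers pm M1' M2" "(z1, a) \<in> M1'"
    "z2 \<in> improvers pm M1' M2" "(z2, a) \<in> M2"
    using assms by (rule improver_partner_partners)
  have "z1 \<noteq> z2" using z improversD(2) by blast
  have "(z1, a) \<notin> M2" "(z2, a) \<notin> M1'"
    using z \<open>z1 \<noteq> z2\<close> M1'_woman_unique M2_woman_unique by blast+
  hence "{u. (u, a) \<in> diff_edges M1' M2} = {z1, z2}"
    using z M1'_woman_unique M2_woman_unique by (auto simp: diff_edges_def)
  with \<open>z1 \<noteq> z2\<close> show ?thesis by simp
qed

lemma improver_component_subset:
  assumes "x \<in> improvers pm M1' M2" and "(x, a) \<in> M1'"
  shows "comp_of (diff_edges M1' M2) (x, a) \<subseteq> {e \<in> diff_edges M1' M2. fst e \<in> improvers pm M1' M2}"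
proof (rule comp_of_minimal)
  show "(x, a) \<in> {e \<in> diff_edges M1' M2. fst e \<in> improvers pm M1' M2}"
    using assms improver_edges_diff_edges by auto
next
  fix e1 e2
  assume e1: "e1 \<in> {e \<in> diff_edges M1' M2. fst e \<in> improvers pm M1' M2}"
    and adj: "(e1, e2) \<in> edge_adj (diff_edges M1' M2)"
  obtain x1 a1 x2 a2 where e: "e1 = (x1, a1)" "e2 = (x2, a2)" by fastforce
  have "diff_edges M1' M2 \<subseteq> M1' \<union> M2" by (auto simp: diff_edges_def)
  with e1 adj improver_partner_partners_improvers[of x1 a1 x2]
  show "e2 \<in> {e \<in> diff_edges M1' M2. fst e \<in> improvers pm M1' M2}"
    by (auto simp: edge_adj_def e)
qed

lemma improver_component_is_cycle:
  assumes "x \<in> improvers pm M1' M2" and "(x, a) \<in> M1'"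
  shows "is_cycle (comp_of (diff_edges M1' M2) (x, a))"
  unfolding is_cycle_def
proof (intro conjI allI impI)
  let ?E = "diff_edges M1' M2"
  have xa: "(x, a) \<in> ?E" using assms improver_edges_diff_edges by auto
  show "comp_of ?E (x, a) \<noteq> {}" by (auto simp: comp_of_def)
  fix u w assume uw: "(u, w) \<in> comp_of ?E (x, a)"
  hence u: "u \<in> improvers pm M1' M2" and "(u, w) \<in> M1' \<union> M2"
    using improver_component_subset[OF assms] by (auto simp: diff_edges_def)
  show "card {w'. (u, w') \<in> comp_of ?E (x, a)} = 2"
    using comp_of_edges_at_man[OF xa uw] card_diff_edges_at_improver[OF u] by simp
  show "card {u'. (u', w) \<in> comp_of ?E (x, a)} = 2"
    using comp_of_edges_at_woman[OF xa uw] card_diff_edges_at_improver_partner[OF u \<open>(u, w) \<in> M1' \<union> M2\<close>]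
    by simp
qed

lemma typeII_if_improvers:
  assumes "fst ` C \<subseteq> improvers pm M1' M2"
  shows "typeII pm pw M1' M2 C"
  unfolding typeII_def
proof (intro conjI allI impI)
  fix u w w' assume "(u, w) \<in> C \<inter> M2" and "(u, w') \<in> C \<inter> M1'"
  with assms improversD(1) show "pm u w' w" by force
next
  fix w u u' assume u'w: "(u', w) \<in> C \<inter> M1'" and uw: "(u, w) \<in> C \<inter> M2"
  hence "u' \<in> improvers pm M1' M2" using assms by force
  then obtain b where "(u', b) \<in> M2" "pm u' w b"
    using u'w M1'_man_unique unfolding improvers_def by blast
  with u'w obtain y where "(y, w) \<in> M2" "pw w y u'" using improver_successor by blast
  with uw M2_woman_unique show "pw w u u'" by blast
qed

lemma improver_edge_in_new_matching:
  assumes "x \<in> improvers pm M1' M2" and "(x, a) \<in> M1'"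
  shows "(x, a) \<in> new_matching pm pw M1' M2"
proof -
  let ?K = "comp_of (diff_edges M1' M2) (x, a)"
  have "(x, a) \<notin> M2" using assms improver_edges_diff_edges by (auto simp: diff_edges_def)
  moreover have "typeII pm pw M1' M2 ?K"
    using improver_component_subset[OF assms] by (intro typeII_if_improvers) auto
  ultimately show ?thesis
    using assms(2) improver_component_is_cycle[OF assms] by (simp add: new_matching_def Let_def)
qed

lemma card_common_le_card_common_new_matching:
  assumes "is_matching U W1 M1" and "men_dominates pm M1' M1"
  shows "card (M1 \<inter> M2) \<le> card (M1' \<inter> new_matching pm pw M1' M2)"
proof -
  let ?N = "new_matching pm pw M1' M2"
  have "fst ` (M1 \<inter> M2) \<subseteq> fst ` (M1' \<inter> ?N)"
  proof
    fix u assume "u \<in> fst ` (M1 \<inter> M2)"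
    then obtain w where uw: "(u, w) \<in> M1" "(u, w) \<in> M2" by auto
    then obtain w' where uw': "(u, w') \<in> M1'" and "w' = w \<or> pm u w' w"
      using assms(2) by (auto simp: men_dominates_def)
    hence "(u, w') \<in> ?N"
    proof (elim disjE)
      assume "w' = w"
      with uw uw' show ?thesis by (simp add: new_matching_def Let_def)
    next
      assume "pm u w' w"
      with uw uw' have "u \<in> improvers pm M1' M2" by (auto simp: improvers_def)
      from this uw' show ?thesis by (rule improver_edge_in_new_matching)
    qed
    with uw' show "u \<in> fst ` (M1' \<inter> ?N)" by force
  qed
  moreover have "finite M1'" using M1'_subset W1_subset finite_U finite_W2
    by (blast intro: finite_subset)
  ultimately have "card (fst ` (M1 \<inter> M2)) \<le> card (fst ` (M1' \<inter> ?N))"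
    by (intro card_mono) auto
  thus ?thesis
    using is_matching_inj_on_fst[OF assms(1)] is_matching_inj_on_fst[OF matching1]
    by (simp add: card_image inj_on_Int)
qed

end

theorem lemma3:
  fixes U :: "'m set" and W1 W2 :: "'w set"
    and pm :: "'m \<Rightarrow> 'w \<Rightarrow> 'w \<Rightarrow> bool" and pw :: "'w \<Rightarrow> 'm \<Rightarrow> 'm \<Rightarrow> bool"
    and M1 M1' M2 :: "('m \<times> 'w) set"
  assumes "finite U" and "finite W2" and "W1 \<subseteq> W2"
    and "card W1 \<le> card W2" and "card W2 = card U"
    and "\<forall>u\<in>U. strict_total_on W2 (pm u)"
    and "\<forall>w\<in>W2. strict_total_on U (pw w)"
    and "stable_matching pm pw U W1 M1"
    and "stable_matching pm pw U W1 M1'"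
    and "men_dominates pm M1' M1"
    and "stable_matching pm pw U W2 M2"
  shows "card (M1' - new_matching pm pw M1' M2) \<le> card (M1 - M2)"
proof -
  interpret two_stable_matchings pm pw U W1 W2 M1' M2
    using assms by unfold_locales auto
  let ?N = "new_matching pm pw M1' M2"
  have matching: "is_matching U W1 M1" using assms(8) by (simp add: stable_matching_def)
  have "finite W1" using assms(2,3) finite_subset by blast
  hence "finite M1" "finite M1'"
    using is_matchingD(1)[OF matching] M1'_subset assms(1) by (blast intro: finite_subset)+
  moreover have "card M1' \<le> card M1"
    using card_matching_le_card_stable_matching[OF matching1 assms(8) assms(1) \<open>finite W1\<close>] assms(4,5)
    by simp
  moreover have "card (M1 \<inter> M2) \<le> card (M1' \<inter> ?N)"
    using matching assms(10) by (rule card_common_le_card_common_new_matching)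
  ultimately show ?thesis by (simp add: card_Diff_subset_Int)
qed

end
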